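(* Assume (A1). Let $t>0$ and $x\in\mathbb{R}^n$ satisfy $$x\in\big(\mathrm{dom}\,J+t\,\mathrm{int}\,\mathrm{dom}\,H^*\big)\cap\big(t\,\mathrm{dom}\,H^*\big).$$ Then each of the two minimization problems $$\text{(P1)}\quad \min_{v\in\mathrm{int}\,\mathrm{dom}\,H^*}\Big\{tD_{H^*}\Big(\frac{x}{t},v\Big)+J^*(\nabla H^*(v))\Big\},\qquad \text{(P2)}\quad \min_{v\in\mathbb{R}^n}\{J(x-tv)+tH^*(v)\}$$ has a minimizer, the minimizer of each is unique, and the two minimizers coincide, i.e. $$\operatorname*{argmin}_{v\in\mathrm{int}\,\mathrm{dom}\,H^*}\Big\{tD_{H^*}\Big(\frac{x}{t},v\Big)+J^*(\nabla H^*(v))\Big\}=\operatorname*{argmin}_{v\in\mathbb{R}^n}\{J(x-tv)+tH^*(v)\}.$$ Moreover the minimal values satisfy $$\min_{v\in\mathrm{int}\,\mathrm{dom}\,H^*}\Big\{tD_{H^*}\Big(\frac{x}{t},v\Big)+J^*(\nabla H^*(v))\Big\}+\min_{v\in\mathbb{R}^n}\{J(x-tv)+tH^*(v)\}=(tH)^*(x)=tH^*\Big(\frac{x}{t}\Big).$$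
   Context: $\Gamma_0(\mathbb{R}^n)$ denotes the set of proper, convex, lower semicontinuous functions $\mathbb{R}^n\to\mathbb{R}\cup\{+\infty\}$. For $f\in\Gamma_0(\mathbb{R}^n)$, $\mathrm{dom}\,f=\{x: f(x)<+\infty\}$ and $f^*(p)=\sup_x\{\langle p,x\rangle-f(x)\}$ is the Legendre–Fenchel transform. A function $g$ is 1-coercive if $g(x)/\|x\|\to+\infty$ as $\|x\|\to\infty$. A function $f\in\Gamma_0(\mathbb{R}^n)$ is Legendre if: $\mathrm{int}\,\mathrm{dom}\,f\neq\emptyset$; $f$ is differentiable on $\mathrm{int}\,\mathrm{dom}\,f$; $\partial f(x)=\emptyset$ for $x\in\mathrm{dom}\,f\setminus\mathrm{int}\,\mathrm{dom}\,f$ and $\partial f(x)=\{\nabla f(x)\}$ for $x\in\mathrm{int}\,\mathrm{dom}\,f$; and $f$ is strictly convex on $\mathrm{int}\,\mathrm{dom}\,f$. For $x,u\in\mathrm{dom}\,f$ with $f$ differentiable at $u$, the Bregman distance is $D_f(x,u)=f(x)-f(u)-\langle\nabla f(u),x-u\rangle$. Assumption (A1): $J,H\in\Gamma_0(\mathbb{R}^n)$, $J$ is 1-coercive, and $H$ is a Legendre function (then $H^*$ is also Legendre and $\mathrm{dom}\,J^*=\mathbb{R}^n$). *)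

theory Defs
  imports "HOL-Analysis.Analysis"
begin

text \<open>Extended-real-valued functions on a Euclidean space; the value
  \<open>\<infinity>\<close> plays the role of \<open>+\<infinity>\<close>, properness forbids \<open>-\<infinity>\<close>.\<close>

definition edom :: "('a::euclidean_space \<Rightarrow> ereal) \<Rightarrow> 'a set" where
  "edom f = {x. f x < \<infinity>}"

definition proper_fun :: "('a::euclidean_space \<Rightarrow> ereal) \<Rightarrow> bool" where
  "proper_fun f \<longleftrightarrow> (\<forall>x. f x \<noteq> -\<infinity>) \<and> edom f \<noteq> {}"

definition econvex :: "('a::euclidean_space \<Rightarrow> ereal) \<Rightarrow> bool" where
  "econvex f \<longleftrightarrow> (\<forall>x y u. 0 < u \<and> u < 1 \<longrightarrow>
      f ((1 - u) *\<^sub>R x + u *\<^sub>R y) \<le> ereal (1 - u) * f x + ereal u * f y)"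

definition lsc :: "('a::euclidean_space \<Rightarrow> ereal) \<Rightarrow> bool" where
  "lsc f \<longleftrightarrow> (\<forall>x c. c < f x \<longrightarrow> (\<forall>\<^sub>F y in at x. c < f y))"

definition Gamma0 :: "('a::euclidean_space \<Rightarrow> ereal) set" where
  "Gamma0 = {f. proper_fun f \<and> econvex f \<and> lsc f}"

definition fconj :: "('a::euclidean_space \<Rightarrow> ereal) \<Rightarrow> 'a \<Rightarrow> ereal" where
  "fconj f p = (SUP x. ereal (p \<bullet> x) - f x)"

definition one_coercive :: "('a::euclidean_space \<Rightarrow> ereal) \<Rightarrow> bool" where
  "one_coercive g \<longleftrightarrow> ((\<lambda>x. g x / ereal (norm x)) \<longlongrightarrow> \<infinity>) at_infinity"

text \<open>Differentiability at an interior point of the domain: the (real-valued near x)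
  function has a Frechet derivative there; the gradient is the representing vector.\<close>
definition edifferentiable :: "('a::euclidean_space \<Rightarrow> ereal) \<Rightarrow> 'a \<Rightarrow> bool" where
  "edifferentiable f x \<longleftrightarrow> x \<in> interior (edom f) \<and>
     (\<lambda>y. real_of_ereal (f y)) differentiable (at x)"

definition egrad :: "('a::euclidean_space \<Rightarrow> ereal) \<Rightarrow> 'a \<Rightarrow> 'a" where
  "egrad f x = (SOME g. ((\<lambda>y. real_of_ereal (f y)) has_derivative (\<lambda>h. g \<bullet> h)) (at x))"

definition subdiff :: "('a::euclidean_space \<Rightarrow> ereal) \<Rightarrow> 'a \<Rightarrow> 'a set" where
  "subdiff f x = {p. x \<in> edom f \<and> (\<forall>y. f x + ereal (p \<bullet> (y - x)) \<le> f y)}"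

definition estrict_convex_on :: "'a::euclidean_space set \<Rightarrow> ('a \<Rightarrow> ereal) \<Rightarrow> bool" where
  "estrict_convex_on S f \<longleftrightarrow> (\<forall>x\<in>S. \<forall>y\<in>S. \<forall>u. x \<noteq> y \<and> 0 < u \<and> u < 1 \<longrightarrow>
      f ((1 - u) *\<^sub>R x + u *\<^sub>R y) < ereal (1 - u) * f x + ereal u * f y)"

definition legendre :: "('a::euclidean_space \<Rightarrow> ereal) \<Rightarrow> bool" where
  "legendre f \<longleftrightarrow> f \<in> Gamma0 \<and> interior (edom f) \<noteq> {}
     \<and> (\<forall>x\<in>interior (edom f). edifferentiable f x)
     \<and> (\<forall>x\<in>edom f - interior (edom f). subdiff f x = {})
     \<and> (\<forall>x\<in>interior (edom f). subdiff f x = {egrad f x})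
     \<and> estrict_convex_on (interior (edom f)) f"

text \<open>Bregman distance D_f(x,u) (used for x in dom f, f differentiable at u).\<close>
definition bregman :: "('a::euclidean_space \<Rightarrow> ereal) \<Rightarrow> 'a \<Rightarrow> 'a \<Rightarrow> ereal" where
  "bregman f x u = f x - f u - ereal (egrad f u \<bullet> (x - u))"

end

theory Submission
  imports Defs
begin

text \<open>The Hopf--Lax problem (P2) is convex, lower semicontinuous and coercive, so it has a
  minimizer \<open>v\<close>; the qualification condition on \<open>x\<close> yields, by a separation argument, a
  common subgradient \<open>g \<in> \<partial>H\<^sup>*(v) \<inter> \<partial>J(x - t v)\<close>. Strict convexity of the Legendre
  function \<open>H\<close> makes the subgradients of \<open>H\<^sup>*\<close> unique, hence \<open>H\<^sup>*\<close> is differentiable, \<open>v\<close> is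
  interior and \<open>\<nabla>H\<^sup>*(v) = g\<close>. For interior \<open>w\<close>, the Fenchel--Young inequalities for \<open>J\<close> and
  for the pair \<open>H, H\<^sup>*\<close> give the three-point inequality
  \<open>P1(w) + P2(v) \<ge> t H\<^sup>*(x/t) + t D\<^bsub>H\<^sup>*\<^esub>(v, w)\<close>, with equality at \<open>w = v\<close>. Since the
  Bregman distance is nonnegative and vanishes only at \<open>w = v\<close> (again by the Legendre property),
  \<open>v\<close> is the unique minimizer of (P1), every minimizer of (P2) is one of (P1), and the optimal
  values add up to \<open>t H\<^sup>*(x/t) = (t H)\<^sup>*(x)\<close>.\<close>


section \<open>Proper convex extended-real functions\<close>

lemma proper_fun_not_MInf: "proper_fun f \<Longrightarrow> f y \<noteq> -\<infinity>"
  by (simp add: proper_fun_def)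

lemma proper_fun_finite:
  assumes "proper_fun f" "y \<in> edom f"
  shows "f y = ereal (real_of_ereal (f y))"
  using assms unfolding proper_fun_def edom_def by (cases "f y") auto

lemma econvex_combination:
  assumes "proper_fun f" "econvex f" "a \<in> edom f" "b \<in> edom f" "0 < u" "u < 1"
  shows "f ((1 - u) *\<^sub>R a + u *\<^sub>R b)
           \<le> ereal ((1 - u) * real_of_ereal (f a) + u * real_of_ereal (f b))"
proof -
  have "f ((1 - u) *\<^sub>R a + u *\<^sub>R b) \<le> ereal (1 - u) * f a + ereal u * f b"
    using assms(2,5,6) unfolding econvex_def by blast
  also have "\<dots> = ereal ((1 - u) * real_of_ereal (f a) + u * real_of_ereal (f b))"
    using proper_fun_finite[OF assms(1,3)] proper_fun_finite[OF assms(1,4)]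
    by (metis plus_ereal.simps(1) times_ereal.simps(1))
  finally show ?thesis .
qed

lemma convex_edom:
  assumes "proper_fun f" "econvex f"
  shows "convex (edom f)"
  unfolding convex_alt
proof (intro ballI allI impI)
  fix a b and u :: real
  assume a: "a \<in> edom f" and b: "b \<in> edom f" and u: "0 \<le> u \<and> u \<le> 1"
  show "(1 - u) *\<^sub>R a + u *\<^sub>R b \<in> edom f"
  proof (cases "u = 0 \<or> u = 1")
    case False
    then have "f ((1 - u) *\<^sub>R a + u *\<^sub>R b) < \<infinity>"
      using econvex_combination[OF assms a b, of u] u False by (auto intro: le_less_trans)
    then show ?thesis unfolding edom_def by simp
  qed (use a b in auto)
qed

lemma convex_on_edom:
  assumes "proper_fun f" "econvex f"
  shows "convex_on (edom f) (\<lambda>y. real_of_ereal (f y))"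
proof (rule convex_onI)
  fix u :: real and a b
  assume u: "0 < u" "u < 1" and a: "a \<in> edom f" and b: "b \<in> edom f"
  have "(1 - u) *\<^sub>R a + u *\<^sub>R b \<in> edom f"
    using convex_edom[OF assms] a b u unfolding convex_alt by auto
  with econvex_combination[OF assms a b u] proper_fun_finite[OF assms(1)]
  show "real_of_ereal (f ((1 - u) *\<^sub>R a + u *\<^sub>R b))
        \<le> (1 - u) * real_of_ereal (f a) + u * real_of_ereal (f b)"
    by (metis ereal_less_eq(3))
qed (rule convex_edom[OF assms])

lemma epigraph_edom:
  assumes "proper_fun f"
  shows "{z. f (fst z) \<le> ereal (snd z)} = epigraph (edom f) (\<lambda>y. real_of_ereal (f y))"
proof -
  have "f y \<le> ereal r \<longleftrightarrow> f y < \<infinity> \<and> real_of_ereal (f y) \<le> r" for y r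
    using proper_fun_not_MInf[OF assms, of y] by (cases "f y") auto
  then show ?thesis unfolding epigraph_def edom_def by auto
qed

lemma subdiff_iff_real:
  assumes "proper_fun f"
  shows "p \<in> subdiff f y \<longleftrightarrow> y \<in> edom f \<and>
           (\<forall>z\<in>edom f. real_of_ereal (f y) + p \<bullet> (z - y) \<le> real_of_ereal (f z))"
proof -
  have "f y + ereal (p \<bullet> (z - y)) \<le> f z \<longleftrightarrow>
          (z \<in> edom f \<longrightarrow> real_of_ereal (f y) + p \<bullet> (z - y) \<le> real_of_ereal (f z))"
    if "y \<in> edom f" for z
  proof (cases "z \<in> edom f")
    case True
    then show ?thesis using proper_fun_finite[OF assms that] proper_fun_finite[OF assms True]
      by (metis ereal_less_eq(3) plus_ereal.simps(1))
  qed (simp add: edom_def)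
  then show ?thesis unfolding subdiff_def by auto
qed

section \<open>Lower semicontinuity and minimizers\<close>

lemma lsc_iff_nhds: "lsc f \<longleftrightarrow> (\<forall>v c. c < f v \<longrightarrow> (\<forall>\<^sub>F y in nhds v. c < f y))"
  unfolding lsc_def eventually_nhds_conv_at by blast

lemma closed_epigraph_lsc:
  assumes "lsc f"
  shows "closed {z::'a::euclidean_space \<times> real. f (fst z) \<le> ereal (snd z)}"
  unfolding closed_def
proof (subst open_subopen, intro ballI)
  fix z assume "z \<in> - {z::'a \<times> real. f (fst z) \<le> ereal (snd z)}"
  then obtain y r where z: "z = (y, r)" and fy: "ereal r < f y" by (cases z) auto
  obtain c where c': "ereal r < ereal c" "ereal c < f y" using ereal_dense2[OF fy] by blast
  then have c: "r < c" "ereal c < f y" by simp_all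
  obtain S where S: "open S" "y \<in> S" "\<And>y'. y' \<in> S \<Longrightarrow> ereal c < f y'"
  proof -
    have "\<forall>\<^sub>F y' in nhds y. ereal c < f y'" using assms c(2) unfolding lsc_iff_nhds by blast
    then show ?thesis using that unfolding eventually_nhds by blast
  qed
  have "S \<times> {..<c} \<subseteq> - {z. f (fst z) \<le> ereal (snd z)}"
  proof clarsimp
    fix y' r' assume "y' \<in> S" "r' < c" "f y' \<le> ereal r'"
    then have "f y' < ereal c" using le_less_trans[of "f y'" "ereal r'" "ereal c"] by simp
    then show False using S(3)[OF \<open>y' \<in> S\<close>] by simp
  qed
  then show "\<exists>T. open T \<and> z \<in> T \<and> T \<subseteq> - {z. f (fst z) \<le> ereal (snd z)}"
    using S(1,2) c(1) z by (intro exI[of _ "S \<times> {..<c}"] conjI open_Times) auto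
qed

lemma ereal_less_add_split:
  fixes a b :: ereal
  assumes "ereal c < a + b" "a \<noteq> -\<infinity>" "b \<noteq> -\<infinity>"
  obtains c1 c2 where "ereal c1 < a" "ereal c2 < b" "c = c1 + c2"
proof (cases a)
  case (real ra)
  show ?thesis
  proof (cases b)
    case (real rb)
    then have "c < ra + rb" using assms(1) \<open>a = ereal ra\<close> by simp
    then show ?thesis using \<open>a = ereal ra\<close> real
      by (intro that[of "ra - (ra + rb - c) / 2" "rb - (ra + rb - c) / 2"]) auto
  next
    case PInf
    then show ?thesis using \<open>a = ereal ra\<close> by (intro that[of "ra - 1" "c - (ra - 1)"]) auto
  qed (use assms in auto)
next
  case PInf
  obtain c2 where "ereal c2 < b"
  proof (cases b)
    case (real r) then show ?thesis using that[of "r - 1"] by simp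
  qed (use assms that[of 0] in auto)
  then show ?thesis using PInf by (intro that[of "c - c2" c2]) auto
qed (use assms in auto)

lemma lsc_add:
  fixes f g :: "'a::euclidean_space \<Rightarrow> ereal"
  assumes lf: "lsc f" and lg: "lsc g" and nf: "\<And>y. f y \<noteq> -\<infinity>" and ng: "\<And>y. g y \<noteq> -\<infinity>"
  shows "lsc (\<lambda>y. f y + g y)"
  unfolding lsc_iff_nhds
proof (intro allI impI)
  fix v c assume c: "c < f v + g v"
  show "\<forall>\<^sub>F y in nhds v. c < f y + g y"
  proof (cases c)
    case MInf
    then have "c < f y + g y" for y using nf[of y] ng[of y] by (cases "f y"; cases "g y") auto
    then show ?thesis by simp
  next
    case PInf then show ?thesis using c by simp
  next
    case (real cr)
    then obtain c1 c2 where c1: "ereal c1 < f v" and c2: "ereal c2 < g v" and "cr = c1 + c2"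
      using ereal_less_add_split[of cr "f v" "g v"] c nf ng by metis
    have "\<forall>\<^sub>F y in nhds v. ereal c1 < f y \<and> ereal c2 < g y"
      using lf lg c1 c2 unfolding lsc_iff_nhds by (simp add: eventually_conj)
    then show ?thesis
    proof (rule eventually_mono)
      fix y assume "ereal c1 < f y \<and> ereal c2 < g y"
      then have "ereal c1 + ereal c2 < f y + g y" by (intro ereal_add_strict_mono2) auto
      then show "c < f y + g y" using real \<open>cr = c1 + c2\<close> by simp
    qed
  qed
qed

lemma lsc_compose_affine:
  assumes "lsc f"
  shows "lsc (\<lambda>v. f (x - t *\<^sub>R v))"
  unfolding lsc_iff_nhds
proof (intro allI impI)
  fix v c assume "c < f (x - t *\<^sub>R v)"
  then have "\<forall>\<^sub>F z in nhds (x - t *\<^sub>R v). c < f z" using assms unfolding lsc_iff_nhds by blast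
  moreover have "filterlim (\<lambda>y. x - t *\<^sub>R y) (nhds (x - t *\<^sub>R v)) (nhds v)"
    by (intro tendsto_intros filterlim_ident)
  ultimately show "\<forall>\<^sub>F y in nhds v. c < f (x - t *\<^sub>R y)" by (rule eventually_compose_filterlim)
qed

lemma lsc_cmult:
  assumes t: "t > 0" and lf: "lsc f" and nf: "\<And>y. f y \<noteq> -\<infinity>"
  shows "lsc (\<lambda>y. ereal t * f y)"
  unfolding lsc_iff_nhds
proof (intro allI impI)
  fix v c assume c: "c < ereal t * f v"
  show "\<forall>\<^sub>F y in nhds v. c < ereal t * f y"
  proof (cases c)
    case MInf
    then have "c < ereal t * f y" for y using nf[of y] t by (cases "f y") auto
    then show ?thesis by simp
  next
    case PInf then show ?thesis using c by simp
  next
    case (real cr)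
    have "ereal (cr / t) < f v"
      using c nf[of v] t real by (cases "f v") (auto simp: field_simps)
    then have "\<forall>\<^sub>F y in nhds v. ereal (cr / t) < f y" using lf unfolding lsc_iff_nhds by blast
    then show ?thesis
    proof (rule eventually_mono)
      fix y assume "ereal (cr / t) < f y"
      then show "c < ereal t * f y" using nf[of y] t real by (cases "f y") (auto simp: field_simps)
    qed
  qed
qed

lemma lsc_le_lim:
  assumes "lsc F" and X: "X \<longlonglongrightarrow> v" and FX: "(\<lambda>n. F (X n)) \<longlonglongrightarrow> m"
  shows "F v \<le> m"
proof (rule ccontr)
  assume "\<not> F v \<le> m"
  then obtain c where c: "m < ereal c" "ereal c < F v" by (meson ereal_dense2 not_le)
  have "\<forall>\<^sub>F y in nhds v. ereal c < F y" using assms(1) c(2) unfolding lsc_iff_nhds by simp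
  then have "\<forall>\<^sub>F n in sequentially. ereal c < F (X n)" using X by (rule eventually_compose_filterlim)
  moreover have "\<forall>\<^sub>F n in sequentially. F (X n) < ereal c" using FX c(1) by (rule order_tendstoD(2))
  ultimately have "\<forall>\<^sub>F n in sequentially. False" by eventually_elim auto
  then show False by simp
qed

lemma lsc_attains_min:
  fixes F :: "'a::euclidean_space \<Rightarrow> ereal"
  assumes lsc: "lsc F" and bdd: "bounded {v. F v \<le> F v0}"
  obtains v where "\<And>w. F v \<le> F w"
proof -
  define m where "m = Inf (range F)"
  have m_le: "m \<le> F w" for w unfolding m_def by (rule INF_lower) simp
  show ?thesis
  proof (cases "F v0 = m")
    case True then show ?thesis using that[of v0] m_le by simp
  next
    case False
    with m_le have "m < F v0" by (simp add: order_less_le)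
    obtain f :: "nat \<Rightarrow> ereal" where f: "decseq f" "range f \<subseteq> range F" "m = (INF i. f i)"
      using Inf_countable_INF[of "range F"] unfolding m_def by auto
    then have "f \<longlonglongrightarrow> m" by (simp add: LIMSEQ_INF)
    have "\<forall>i. \<exists>v. f i = F v" using f(2) by auto
    then obtain V where V: "\<And>i. f i = F (V i)" by metis
    have "\<forall>\<^sub>F i in sequentially. f i < F v0"
      using \<open>f \<longlonglongrightarrow> m\<close> \<open>m < F v0\<close> by (rule order_tendstoD(2))
    then obtain N where N: "\<And>i. N \<le> i \<Longrightarrow> f i < F v0" unfolding eventually_sequentially by auto
    define W where "W n = V (n + N)" for n
    have Wm: "(\<lambda>n. F (W n)) \<longlonglongrightarrow> m"
      using LIMSEQ_ignore_initial_segment[OF \<open>f \<longlonglongrightarrow> m\<close>, of N] V unfolding W_def by simp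
    have "W n \<in> {v. F v \<le> F v0}" for n
      using N[of "n + N"] V[of "n + N"] unfolding W_def by simp
    then have "\<forall>n. W n \<in> closure {v. F v \<le> F v0}" using closure_subset by blast
    from seq_compactE[OF compact_imp_seq_compact[OF compact_closure[THEN iffD2, OF bdd]] this]
    obtain vb \<phi> where \<phi>: "strict_mono \<phi>" and lim: "(W \<circ> \<phi>) \<longlonglongrightarrow> vb" by blast
    have "F vb \<le> m"
      using lsc_le_lim[OF lsc lim] LIMSEQ_subseq_LIMSEQ[OF Wm \<phi>] by (simp add: comp_def)
    then show ?thesis using that m_le order_trans by metis
  qed
qed

lemma one_coercive_ge_linear:
  assumes coercive: "one_coercive J" and not_MInf: "\<And>y. J y \<noteq> -\<infinity>"
  obtains R where "\<And>y. R \<le> norm y \<Longrightarrow> ereal (L * norm y) \<le> J y"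
proof -
  have "\<forall>\<^sub>F y in at_infinity. ereal L < J y / ereal (norm y)"
    using coercive unfolding one_coercive_def tendsto_PInfty by blast
  then obtain R0 where R0: "\<And>y. R0 \<le> norm y \<Longrightarrow> ereal L < J y / ereal (norm y)"
    unfolding eventually_at_infinity by blast
  show ?thesis
  proof (rule that[of "max R0 1"])
    fix y :: 'a assume y: "max R0 1 \<le> norm y"
    then have "norm y > 0" by linarith
    show "ereal (L * norm y) \<le> J y"
    proof (cases "J y")
      case (real j)
      then have "L < j / norm y" using R0[of y] y \<open>norm y > 0\<close> by simp
      then show ?thesis using real \<open>norm y > 0\<close> by (simp add: field_simps)
    qed (use not_MInf in auto)
  qed
qed

section \<open>The Legendre--Fenchel transform\<close>

lemma fenchel_young: "ereal (p \<bullet> y) - f y \<le> fconj f p"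
  unfolding fconj_def by (rule SUP_upper) simp

lemma fconj_least: "(\<And>y. ereal (p \<bullet> y) - f y \<le> c) \<Longrightarrow> fconj f p \<le> c"
  unfolding fconj_def by (rule SUP_least) simp

lemma fconj_le_affine_minorant:
  assumes "proper_fun f" "\<And>y. y \<in> edom f \<Longrightarrow> p \<bullet> y - \<beta> \<le> real_of_ereal (f y)"
  shows "fconj f p \<le> ereal \<beta>"
proof (rule fconj_least)
  fix y
  show "ereal (p \<bullet> y) - f y \<le> ereal \<beta>"
  proof (cases "y \<in> edom f")
    case True
    then show ?thesis using assms(2)[OF True] by (subst proper_fun_finite[OF assms(1) True]) simp
  qed (simp add: edom_def)
qed

lemma fenchel_young_eq:
  assumes "proper_fun f" "p \<in> subdiff f y"
  shows "fconj f p = ereal (p \<bullet> y - real_of_ereal (f y))"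
proof (rule antisym)
  have y: "y \<in> edom f" using assms(2) unfolding subdiff_def by blast
  show "fconj f p \<le> ereal (p \<bullet> y - real_of_ereal (f y))"
    using assms unfolding subdiff_iff_real[OF assms(1)]
    by (intro fconj_le_affine_minorant) (auto simp: inner_diff_right)
  show "ereal (p \<bullet> y - real_of_ereal (f y)) \<le> fconj f p"
    using fenchel_young[of p y f] by (subst (asm) proper_fun_finite[OF assms(1) y]) simp
qed

lemma fconj_not_MInf:
  assumes "proper_fun f" shows "fconj f p \<noteq> -\<infinity>"
proof -
  obtain y where y: "y \<in> edom f" using assms unfolding proper_fun_def by auto
  have "ereal (p \<bullet> y - real_of_ereal (f y)) \<le> fconj f p"
    using fenchel_young[of p y f] by (subst (asm) proper_fun_finite[OF assms y]) simp
  then show ?thesis by auto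
qed

lemma fenchel_young_real:
  assumes "proper_fun f" "y \<in> edom f" "p \<in> edom (fconj f)"
  shows "p \<bullet> y - real_of_ereal (f y) \<le> real_of_ereal (fconj f p)"
proof -
  obtain a b where "f y = ereal a" "fconj f p = ereal b"
    using assms fconj_not_MInf[OF assms(1), of p] unfolding proper_fun_def edom_def
    by (cases "f y"; cases "fconj f p") auto
  then show ?thesis using fenchel_young[of p y f] by simp
qed

lemma fconj_econvex:
  assumes "proper_fun f" shows "econvex (fconj f)"
  unfolding econvex_def
proof (intro allI impI)
  fix a b and u :: real
  assume u: "0 < u \<and> u < 1"
  let ?K = "fconj f"
  show "?K ((1 - u) *\<^sub>R a + u *\<^sub>R b) \<le> ereal (1 - u) * ?K a + ereal u * ?K b"
  proof (cases "?K a = \<infinity> \<or> ?K b = \<infinity>")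
    case True
    then have "ereal (1 - u) * ?K a + ereal u * ?K b = \<infinity>"
      using u fconj_not_MInf[OF assms, of a] fconj_not_MInf[OF assms, of b]
      by (cases "?K a"; cases "?K b") auto
    then show ?thesis by (simp only: ereal_less_eq(1))
  next
    case False
    then obtain ka kb where ka: "?K a = ereal ka" and kb: "?K b = ereal kb"
      using fconj_not_MInf[OF assms] by (cases "?K a"; cases "?K b") auto
    have "?K ((1 - u) *\<^sub>R a + u *\<^sub>R b) \<le> ereal ((1 - u) * ka + u * kb)"
    proof (rule fconj_least)
      fix y
      show "ereal (((1 - u) *\<^sub>R a + u *\<^sub>R b) \<bullet> y) - f y \<le> ereal ((1 - u) * ka + u * kb)"
      proof (cases "f y")
        case (real h)
        have "a \<bullet> y - h \<le> ka" "b \<bullet> y - h \<le> kb"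
          using fenchel_young[of a y f] fenchel_young[of b y f] real ka kb by auto
        then have "(1 - u) * (a \<bullet> y - h) + u * (b \<bullet> y - h) \<le> (1 - u) * ka + u * kb"
          using u by (intro add_mono mult_left_mono) auto
        then show ?thesis using real by (simp add: algebra_simps)
      qed (use assms in \<open>auto simp: proper_fun_def\<close>)
    qed
    then show ?thesis using ka kb by simp
  qed
qed

lemma fconj_lsc: assumes "proper_fun f" shows "lsc (fconj f)"
  unfolding lsc_def
proof (intro allI impI)
  fix v c assume "c < fconj f v"
  then obtain y where y: "c < ereal (v \<bullet> y) - f y" unfolding fconj_def by (auto simp: less_SUP_iff)
  obtain h where h: "f y = ereal h" using y assms unfolding proper_fun_def by (cases "f y") auto
  obtain c' where c': "c < ereal c'" "c' < v \<bullet> y - h"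
    using ereal_dense2[of c "ereal (v \<bullet> y - h)"] y h by auto
  have "((\<lambda>v'. v' \<bullet> y - h) \<longlongrightarrow> v \<bullet> y - h) (at v)" by (intro tendsto_intros)
  then have "\<forall>\<^sub>F v' in at v. c' < v' \<bullet> y - h" using c' by (intro order_tendstoD(1)) auto
  then show "\<forall>\<^sub>F v' in at v. c < fconj f v'"
  proof (rule eventually_mono)
    fix v' assume "c' < v' \<bullet> y - h"
    then have "ereal c' < ereal (v' \<bullet> y) - f y" using h by simp
    with c'(1) fenchel_young[of v' y f] show "c < fconj f v'" by (meson less_le_trans less_trans)
  qed
qed

lemma fconj_Gamma0:
  assumes "proper_fun f" "p \<in> subdiff f y"
  shows "fconj f \<in> Gamma0"
proof -
  have "p \<in> edom (fconj f)" using fenchel_young_eq[OF assms] unfolding edom_def by simp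
  then show ?thesis unfolding Gamma0_def proper_fun_def
    using fconj_not_MInf[OF assms(1)] fconj_econvex[OF assms(1)] fconj_lsc[OF assms(1)] by auto
qed

lemma fconj_cmult:
  assumes "t > 0"
  shows "fconj (\<lambda>y. ereal t * H y) x = ereal t * fconj H ((1 / t) *\<^sub>R x)"
proof -
  have "ereal (x \<bullet> y) - ereal t * H y = ereal t * (ereal (((1 / t) *\<^sub>R x) \<bullet> y) - H y)" for y
    using assms by (cases "H y") (auto simp: algebra_simps)
  then have "fconj (\<lambda>y. ereal t * H y) x = (SUP y. ereal t * (ereal (((1 / t) *\<^sub>R x) \<bullet> y) - H y))"
    unfolding fconj_def by simp
  also have "\<dots> = ereal t * fconj H ((1 / t) *\<^sub>R x)"
    unfolding fconj_def using assms by (subst Sup_ereal_mult_left') auto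
  finally show ?thesis .
qed

lemma fconj_fconj_ge_affine_minorant:
  assumes "proper_fun f" "\<And>y. y \<in> edom f \<Longrightarrow> w \<bullet> y - \<beta> \<le> real_of_ereal (f y)"
  shows "ereal (w \<bullet> u - \<beta>) \<le> fconj (fconj f) u"
proof -
  have "ereal (u \<bullet> w) - ereal \<beta> \<le> ereal (u \<bullet> w) - fconj f w"
    using fconj_le_affine_minorant[OF assms] by (intro ereal_minus_mono) simp_all
  also have "\<dots> \<le> fconj (fconj f) u" by (rule fenchel_young)
  finally show ?thesis by (simp add: inner_commute)
qed

lemma epigraph_separation:
  assumes "f \<in> Gamma0" "ereal \<alpha> < f u"
  obtains a b c where "a \<bullet> u + b * \<alpha> < c" "\<And>y r. f y \<le> ereal r \<Longrightarrow> c < a \<bullet> y + b * r"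
proof -
  have pf: "proper_fun f" and "econvex f" "lsc f" using assms(1) unfolding Gamma0_def by auto
  let ?E = "{z::'a \<times> real. f (fst z) \<le> ereal (snd z)}"
  have cvx: "convex ?E"
    unfolding epigraph_edom[OF pf] by (rule convex_epigraphI[OF convex_on_edom[OF pf \<open>econvex f\<close>]])
  have cl: "closed ?E" by (rule closed_epigraph_lsc[OF \<open>lsc f\<close>])
  have out: "(u, \<alpha>) \<notin> ?E" using assms(2) by (simp add: not_le)
  obtain ab c where ab_u: "ab \<bullet> (u, \<alpha>) < c" and ab_E: "\<And>z. z \<in> ?E \<Longrightarrow> c < ab \<bullet> z"
    using separating_hyperplane_closed_point[OF cvx cl out] by blast
  obtain a b where ab: "ab = (a, b)" by (cases ab)
  show ?thesis
  proof (rule that[of a b c])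
    show "a \<bullet> u + b * \<alpha> < c" using ab_u ab by simp
    fix y r assume "f y \<le> ereal r"
    then show "c < a \<bullet> y + b * r" using ab_E[of "(y, r)"] ab by simp
  qed
qed

lemma affine_minorant_large_off_domain:
  assumes pf: "proper_fun f" and p0: "p0 \<in> subdiff f u0"
    and gap: "a \<bullet> u < c" and dom: "\<And>y. y \<in> edom f \<Longrightarrow> c < a \<bullet> y"
  obtains w \<beta> where "\<And>y. y \<in> edom f \<Longrightarrow> w \<bullet> y - \<beta> \<le> real_of_ereal (f y)"
    and "\<alpha> < w \<bullet> u - \<beta>"
proof -
  let ?k = "\<lambda>y. real_of_ereal (f y)"
  have sub: "?k u0 + p0 \<bullet> (y - u0) \<le> ?k y" if "y \<in> edom f" for y
    using p0 that unfolding subdiff_iff_real[OF pf] by blast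
  define d where "d = ?k u0 + p0 \<bullet> (u - u0)"
  define s where "s = (\<bar>\<alpha>\<bar> + \<bar>d\<bar> + 1) / (c - a \<bullet> u)"
  have "s > 0" using gap unfolding s_def by simp
  \<comment> \<open>Tilt the minorant given by \<open>p0\<close> by \<open>s (c - a \<bullet> y)\<close>, which is negative on \<open>edom f\<close>.\<close>
  show ?thesis
  proof (rule that[of "p0 - s *\<^sub>R a" "p0 \<bullet> u0 - ?k u0 - s * c"])
    fix y assume y: "y \<in> edom f"
    have "s * (c - a \<bullet> y) \<le> 0" using \<open>s > 0\<close> dom[OF y] by (simp add: mult_le_0_iff)
    then show "(p0 - s *\<^sub>R a) \<bullet> y - (p0 \<bullet> u0 - ?k u0 - s * c) \<le> ?k y"
      using sub[OF y] by (simp add: algebra_simps)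
  next
    have "(p0 - s *\<^sub>R a) \<bullet> u - (p0 \<bullet> u0 - ?k u0 - s * c) = d + s * (c - a \<bullet> u)"
      unfolding d_def by (simp add: algebra_simps)
    also have "s * (c - a \<bullet> u) = \<bar>\<alpha>\<bar> + \<bar>d\<bar> + 1" unfolding s_def using gap by simp
    finally show "\<alpha> < (p0 - s *\<^sub>R a) \<bullet> u - (p0 \<bullet> u0 - ?k u0 - s * c)" by linarith
  qed
qed

lemma le_fconj_fconj:
  assumes "f \<in> Gamma0" "p0 \<in> subdiff f u0"
  shows "f u \<le> fconj (fconj f) u"
proof (rule ccontr)
  have pf: "proper_fun f" using assms(1) unfolding Gamma0_def by auto
  let ?k = "\<lambda>y. real_of_ereal (f y)"
  assume "\<not> f u \<le> fconj (fconj f) u"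
  then obtain \<alpha> where \<alpha>: "fconj (fconj f) u < ereal \<alpha>" "ereal \<alpha> < f u"
    by (meson ereal_dense2 not_le)
  obtain a b c where sep_u: "a \<bullet> u + b * \<alpha> < c"
    and sep_epi: "\<And>y r. f y \<le> ereal r \<Longrightarrow> c < a \<bullet> y + b * r"
    using epigraph_separation[OF assms(1) \<alpha>(2)] by blast
  have sep: "c < a \<bullet> y + b * ?k y" if "y \<in> edom f" for y
    by (rule sep_epi) (simp add: proper_fun_finite[OF pf that, symmetric])
  obtain w \<beta> where minorant: "\<And>y. y \<in> edom f \<Longrightarrow> w \<bullet> y - \<beta> \<le> ?k y"
    and above: "\<alpha> < w \<bullet> u - \<beta>"
  proof (cases b "0::real" rule: linorder_cases)
    case less
    obtain y0 where y0: "y0 \<in> edom f" using pf unfolding proper_fun_def by auto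
    define r where "r = max (?k y0) ((c - a \<bullet> y0) / b)"
    have "f y0 \<le> ereal r"
      unfolding r_def by (subst proper_fun_finite[OF pf y0]) simp
    then have "c < a \<bullet> y0 + b * r" by (rule sep_epi)
    moreover have "b * r \<le> b * ((c - a \<bullet> y0) / b)"
      using less unfolding r_def by (intro mult_left_mono_neg) auto
    ultimately show ?thesis using less by simp
  next
    case greater
    show ?thesis
    proof (rule that[of "- (1 / b) *\<^sub>R a" "- c / b"])
      fix y assume "y \<in> edom f"
      then show "(- (1 / b) *\<^sub>R a) \<bullet> y - - c / b \<le> ?k y"
        using sep[of y] greater by (simp add: field_simps)
    next
      show "\<alpha> < (- (1 / b) *\<^sub>R a) \<bullet> u - - c / b"
        using sep_u greater by (simp add: field_simps)
    qed
  next
    case equal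
    then have "a \<bullet> u < c" "\<And>y. y \<in> edom f \<Longrightarrow> c < a \<bullet> y" using sep_u sep by simp_all
    then show ?thesis using affine_minorant_large_off_domain[OF pf assms(2)] that by metis
  qed
  have "ereal \<alpha> < ereal (w \<bullet> u - \<beta>)" using above by simp
  also have "\<dots> \<le> fconj (fconj f) u"
    by (rule fconj_fconj_ge_affine_minorant[OF pf]) (rule minorant)
  finally show False using \<alpha>(1) by simp
qed

section \<open>Real convex functions: minorants and the sum rule at a minimum\<close>

lemma convex_on_affine_minorant_extend:
  fixes f :: "'a::euclidean_space \<Rightarrow> real"
  assumes cf: "convex_on D f" and w0: "w0 \<in> interior D" and v: "v \<in> D"
    and minorant: "\<And>y. y \<in> interior D \<Longrightarrow> \<alpha> + g \<bullet> y \<le> f y"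
  shows "\<alpha> + g \<bullet> v \<le> f v"
proof (rule ccontr)
  assume fails: "\<not> \<alpha> + g \<bullet> v \<le> f v"
  define \<delta> where "\<delta> = \<alpha> + g \<bullet> v - f v"
  have "\<delta> > 0" using fails unfolding \<delta>_def by simp
  define B where "B = \<bar>f w0 - \<alpha> - g \<bullet> w0\<bar> + \<delta>"
  have "B > 0" "\<delta> \<le> B" using \<open>\<delta> > 0\<close> unfolding B_def by auto
  define s where "s = \<delta> / (4 * B)"
  have s: "0 < s" "s \<le> 1/4"
    using \<open>\<delta> > 0\<close> \<open>B > 0\<close> \<open>\<delta> \<le> B\<close> unfolding s_def by (auto simp: field_simps)
  have "v - s *\<^sub>R (v - w0) \<in> interior D"
    using mem_interior_closure_convex_shrink[OF convex_on_imp_convex[OF cf] w0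
        closure_subset[THEN subsetD, OF v] s(1)] s(2) by auto
  moreover have "v - s *\<^sub>R (v - w0) = (1 - s) *\<^sub>R v + s *\<^sub>R w0" by (simp add: algebra_simps)
  ultimately have "\<alpha> + g \<bullet> ((1 - s) *\<^sub>R v + s *\<^sub>R w0) \<le> f ((1 - s) *\<^sub>R v + s *\<^sub>R w0)"
    using minorant by simp
  also have "\<dots> \<le> (1 - s) * f v + s * f w0"
    using convex_onD[OF cf, of s v w0] s v interior_subset w0 by auto
  finally have "(1 - s) * \<delta> \<le> s * (f w0 - \<alpha> - g \<bullet> w0)"
    unfolding \<delta>_def by (simp add: algebra_simps)
  also have "\<dots> \<le> s * B" using s \<open>\<delta> > 0\<close> unfolding B_def by (intro mult_left_mono) auto
  also have "\<dots> = \<delta> / 4" using \<open>B > 0\<close> unfolding s_def by simp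
  finally have "(1 - s) * \<delta> \<le> \<delta> / 4" .
  moreover have "(3/4) * \<delta> \<le> (1 - s) * \<delta>" using s \<open>\<delta> > 0\<close> by (intro mult_right_mono) auto
  ultimately show False using \<open>\<delta> > 0\<close> by linarith
qed

lemma le_add_mult_pos_imp:
  fixes c p \<beta> :: real
  assumes "\<And>s. s > 0 \<Longrightarrow> c \<le> p + \<beta> * s"
  shows "0 \<le> \<beta>" and "c \<le> p"
proof -
  show "0 \<le> \<beta>"
  proof (rule ccontr)
    assume "\<not> 0 \<le> \<beta>"
    then have "\<beta> * ((\<bar>c - p\<bar> + 1) / - \<beta>) = - (\<bar>c - p\<bar> + 1)" by simp
    moreover have "(\<bar>c - p\<bar> + 1) / - \<beta> > 0" using \<open>\<not> 0 \<le> \<beta>\<close> by (intro divide_pos_pos) auto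
    ultimately show False using assms[of "(\<bar>c - p\<bar> + 1) / - \<beta>"] by linarith
  qed
  then have "c \<le> p + e" if "e > 0" for e
    using assms[of "e / \<beta>"] assms[of 1] that by (cases "\<beta> = 0") auto
  then show "c \<le> p" by (rule field_le_epsilon)
qed

lemma convex_strict_epigraph:
  assumes "convex_on S f"
  shows "convex {z. fst z \<in> S \<and> f (fst z) < snd z}"
  unfolding convex_alt
proof (intro ballI allI impI, clarsimp)
  fix y1 r1 y2 r2 and u :: real
  assume a: "y1 \<in> S" "f y1 < r1" "y2 \<in> S" "f y2 < r2" "0 \<le> u" "u \<le> 1"
  show "(1 - u) *\<^sub>R y1 + u *\<^sub>R y2 \<in> S \<and> f ((1 - u) *\<^sub>R y1 + u *\<^sub>R y2) < (1 - u) * r1 + u * r2"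
  proof
    show "(1 - u) *\<^sub>R y1 + u *\<^sub>R y2 \<in> S"
      using convex_on_imp_convex[OF assms] a unfolding convex_alt by blast
    have "f ((1 - u) *\<^sub>R y1 + u *\<^sub>R y2) \<le> (1 - u) * f y1 + u * f y2"
      using convex_onD[OF assms] a by blast
    also have "\<dots> < (1 - u) * r1 + u * r2"
    proof (cases "u = 0")
      case False
      then have "u * f y2 < u * r2" using a by simp
      moreover have "(1 - u) * f y1 \<le> (1 - u) * r1" using a by (intro mult_left_mono) auto
      ultimately show ?thesis by linarith
    qed (use a in simp)
    finally show "f ((1 - u) *\<^sub>R y1 + u *\<^sub>R y2) < (1 - u) * r1 + u * r2" .
  qed
qed

lemma convex_hypograph_diff:
  assumes "convex_on S f"
  shows "convex {z. fst z \<in> S \<and> snd z \<le> c - f (fst z)}"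
  unfolding convex_alt
proof (intro ballI allI impI, clarsimp)
  fix y1 r1 y2 r2 and u :: real
  assume a: "y1 \<in> S" "r1 \<le> c - f y1" "y2 \<in> S" "r2 \<le> c - f y2" "0 \<le> u" "u \<le> 1"
  have "f ((1 - u) *\<^sub>R y1 + u *\<^sub>R y2) \<le> (1 - u) * f y1 + u * f y2"
    using convex_onD[OF assms] a by blast
  moreover have "(1 - u) * r1 + u * r2 \<le> (1 - u) * (c - f y1) + u * (c - f y2)"
    using a by (intro add_mono mult_left_mono) auto
  ultimately show "(1 - u) *\<^sub>R y1 + u *\<^sub>R y2 \<in> S \<and>
      (1 - u) * r1 + u * r2 \<le> c - f ((1 - u) *\<^sub>R y1 + u *\<^sub>R y2)"
    using convex_on_imp_convex[OF assms] a unfolding convex_alt by (auto simp: algebra_simps)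
qed

lemma convex_on_compose_affine:
  assumes "convex_on S f"
  shows "convex_on {v. x - t *\<^sub>R v \<in> S} (\<lambda>v. f (x - t *\<^sub>R v))"
proof -
  have affine: "x - t *\<^sub>R ((1 - u) *\<^sub>R a + u *\<^sub>R b) = (1 - u) *\<^sub>R (x - t *\<^sub>R a) + u *\<^sub>R (x - t *\<^sub>R b)"
    for u a b by (simp add: algebra_simps)
  have "convex {v. x - t *\<^sub>R v \<in> S}"
    using convex_on_imp_convex[OF assms] unfolding convex_alt by (simp add: affine)
  then show ?thesis
    using convex_onD[OF assms] by (intro convex_onI) (simp_all add: affine)
qed

lemma inner_ge_on_interior_imp_zero:
  assumes w0: "w0 \<in> interior B" and "a \<bullet> w0 \<le> c" and ge: "\<And>w. w \<in> interior B \<Longrightarrow> c \<le> a \<bullet> w"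
  shows "a = 0"
proof (rule ccontr)
  assume "a \<noteq> 0"
  obtain e where e: "e > 0" "ball w0 e \<subseteq> interior B"
    using w0 open_interior open_contains_ball by blast
  define y where "y = w0 - (e / 2 / norm a) *\<^sub>R a"
  have "dist w0 y = e / 2" using \<open>a \<noteq> 0\<close> e unfolding y_def by (simp add: dist_norm)
  then have "y \<in> interior B" using e by auto
  moreover have "a \<bullet> y = a \<bullet> w0 - e / 2 * norm a"
    unfolding y_def using \<open>a \<noteq> 0\<close>
    by (simp add: inner_diff_right power2_norm_eq_inner[symmetric] power2_eq_square)
  moreover have "e / 2 * norm a > 0" using e \<open>a \<noteq> 0\<close> by simp
  ultimately show False using ge[of y] \<open>a \<bullet> w0 \<le> c\<close> by linarith
qed

lemma convex_sum_min_separation: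
  fixes f g :: "'a::euclidean_space \<Rightarrow> real"
  assumes f: "convex_on A f" and g: "convex_on B g"
    and w0: "w0 \<in> A" "w0 \<in> interior B" and v: "v \<in> A" "v \<in> B"
    and min: "\<And>w. w \<in> A \<Longrightarrow> w \<in> B \<Longrightarrow> f v + g v \<le> f w + g w"
  obtains a \<beta> c where "\<beta> > 0"
    and "\<And>w r. w \<in> A \<Longrightarrow> r \<le> f v - f w \<Longrightarrow> a \<bullet> w + \<beta> * r \<le> c"
    and "\<And>w. w \<in> interior B \<Longrightarrow> c \<le> a \<bullet> w + \<beta> * (g w - g v)"
proof -
  define Epi where "Epi = {z. fst z \<in> interior B \<and> g (fst z) - g v < snd z}"
  define Hyp where "Hyp = {z. fst z \<in> A \<and> snd z \<le> f v - f (fst z)}"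
  have "convex_on (interior B) (\<lambda>w. g w - g v)"
    using convex_on_subset[OF g interior_subset convex_interior[OF convex_on_imp_convex[OF g]]]
    by (simp add: convex_on_diff concave_on_const convex_on_imp_convex)
  then have "convex Epi" unfolding Epi_def by (rule convex_strict_epigraph)
  moreover have "convex Hyp" unfolding Hyp_def by (rule convex_hypograph_diff[OF f])
  moreover have "(v, 0) \<in> Hyp" "(w0, g w0 - g v + 1) \<in> Epi"
    using v w0 unfolding Hyp_def Epi_def by auto
  moreover have "Hyp \<inter> Epi = {}"
    using min interior_subset unfolding Hyp_def Epi_def by fastforce
  ultimately obtain ab c where ab0: "ab \<noteq> 0"
    and sep_Hyp: "\<And>z. z \<in> Hyp \<Longrightarrow> ab \<bullet> z \<le> c" and sep_Epi: "\<And>z. z \<in> Epi \<Longrightarrow> c \<le> ab \<bullet> z"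
    using separating_hyperplane_sets[of Hyp Epi] by (metis empty_iff)
  obtain a \<beta> where ab: "ab = (a, \<beta>)" by (cases ab)
  have Hyp_le: "a \<bullet> w + \<beta> * r \<le> c" if "w \<in> A" "r \<le> f v - f w" for w r
    using sep_Hyp[of "(w, r)"] that ab unfolding Hyp_def by simp
  have Epi_ge: "c \<le> (a \<bullet> w + \<beta> * (g w - g v)) + \<beta> * s" if "w \<in> interior B" "s > 0" for w s
    using sep_Epi[of "(w, g w - g v + s)"] that ab unfolding Epi_def by (simp add: algebra_simps)
  have int_ge: "c \<le> a \<bullet> w + \<beta> * (g w - g v)" if "w \<in> interior B" for w
    using le_add_mult_pos_imp(2)[OF Epi_ge[OF that]] .
  \<comment> \<open>The hyperplane is not vertical since \<open>w0 \<in> A\<close> is interior to \<open>B\<close>.\<close>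
  have "\<beta> \<noteq> 0"
  proof
    assume "\<beta> = 0"
    then have "c \<le> a \<bullet> w" if "w \<in> interior B" for w using int_ge[OF that] by simp
    then have "a = 0"
      using inner_ge_on_interior_imp_zero[OF w0(2)] Hyp_le[OF w0(1), of "f v - f w0"] \<open>\<beta> = 0\<close> by simp
    with \<open>\<beta> = 0\<close> ab0 ab show False by (simp add: zero_prod_def)
  qed
  moreover have "0 \<le> \<beta>" using le_add_mult_pos_imp(1)[OF Epi_ge[OF w0(2)]] .
  ultimately have "\<beta> > 0" by simp
  then show ?thesis using Hyp_le int_ge by (rule that)
qed

lemma convex_sum_min_subgradients:
  fixes f g :: "'a::euclidean_space \<Rightarrow> real"
  assumes f: "convex_on A f" and g: "convex_on B g"
    and w0: "w0 \<in> A" "w0 \<in> interior B" and v: "v \<in> A" "v \<in> B"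
    and min: "\<And>w. w \<in> A \<Longrightarrow> w \<in> B \<Longrightarrow> f v + g v \<le> f w + g w"
  obtains p where "\<And>w. w \<in> B \<Longrightarrow> g v + p \<bullet> (w - v) \<le> g w"
    and "\<And>w. w \<in> A \<Longrightarrow> f v - p \<bullet> (w - v) \<le> f w"
proof -
  obtain a \<beta> c where "\<beta> > 0"
    and Hyp_le: "\<And>w r. w \<in> A \<Longrightarrow> r \<le> f v - f w \<Longrightarrow> a \<bullet> w + \<beta> * r \<le> c"
    and int_ge: "\<And>w. w \<in> interior B \<Longrightarrow> c \<le> a \<bullet> w + \<beta> * (g w - g v)"
    using convex_sum_min_separation[OF assms] by metis
  define p where "p = - (1 / \<beta>) *\<^sub>R a"
  have p_inner: "p \<bullet> w = - (a \<bullet> w) / \<beta>" for w unfolding p_def by simp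
  have "(g v + c / \<beta>) + p \<bullet> w \<le> g w" if "w \<in> interior B" for w
  proof -
    have "c / \<beta> \<le> (a \<bullet> w + \<beta> * (g w - g v)) / \<beta>"
      using int_ge[OF that] \<open>\<beta> > 0\<close> by (simp add: divide_right_mono)
    also have "\<dots> = a \<bullet> w / \<beta> + (g w - g v)" using \<open>\<beta> > 0\<close> by (simp add: add_divide_distrib)
    finally show ?thesis by (simp add: p_inner)
  qed
  then have minorant: "(g v + c / \<beta>) + p \<bullet> w \<le> g w" if "w \<in> B" for w
    by (rule convex_on_affine_minorant_extend[OF g w0(2) that])
  have "c / \<beta> \<le> a \<bullet> v / \<beta>" using minorant[OF v(2)] by (simp add: p_inner)
  then have "c \<le> a \<bullet> v" using \<open>\<beta> > 0\<close> by (simp add: divide_le_cancel)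
  then have c: "c = a \<bullet> v" using Hyp_le[OF v(1), of 0] by simp
  show ?thesis
  proof (rule that[of p])
    fix w assume "w \<in> B"
    moreover have "p \<bullet> (w - v) = c / \<beta> + p \<bullet> w" using c by (simp add: inner_diff_right p_inner)
    ultimately show "g v + p \<bullet> (w - v) \<le> g w" using minorant[of w] by (simp add: add.assoc)
  next
    fix w assume "w \<in> A"
    then have "\<beta> * (f v - f w) \<le> a \<bullet> v - a \<bullet> w" using Hyp_le[of w "f v - f w"] c by simp
    then have "f v - f w \<le> (a \<bullet> v - a \<bullet> w) / \<beta>" using \<open>\<beta> > 0\<close> by (simp add: pos_le_divide_eq mult.commute)
    moreover have "p \<bullet> (w - v) = (a \<bullet> v - a \<bullet> w) / \<beta>"
      by (simp add: inner_diff_right p_inner diff_divide_distrib)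
    ultimately show "f v - p \<bullet> (w - v) \<le> f w" by simp
  qed
qed

section \<open>Subgradients and differentiability\<close>

lemma subdiff_nonempty_interior:
  assumes pf: "proper_fun f" and cf: "econvex f" and v: "v \<in> interior (edom f)"
  obtains p where "p \<in> subdiff f v"
proof -
  have vD: "v \<in> edom f" using v interior_subset by blast
  \<comment> \<open>\<open>v\<close> trivially minimizes \<open>0 + f\<close> over \<open>{v} \<inter> edom f\<close>.\<close>
  have "convex_on {v} (\<lambda>_. 0::real)" by (simp add: convex_on_const)
  then obtain p where "\<And>w. w \<in> edom f \<Longrightarrow> real_of_ereal (f v) + p \<bullet> (w - v) \<le> real_of_ereal (f w)"
    by (rule convex_sum_min_subgradients[OF _ convex_on_edom[OF pf cf] _ v _ vD]) auto
  then show ?thesis using vD by (intro that[of p]) (simp add: subdiff_iff_real[OF pf])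
qed

lemma interior_if_unique_subgradient:
  assumes pf: "proper_fun f" and cf: "econvex f" and ne: "interior (edom f) \<noteq> {}"
    and u: "u \<in> subdiff f v" and unique: "\<And>u'. u' \<in> subdiff f v \<Longrightarrow> u' = u"
  shows "v \<in> interior (edom f)"
proof (rule ccontr)
  assume "v \<notin> interior (edom f)"
  let ?D = "edom f" and ?k = "\<lambda>y. real_of_ereal (f y)"
  have cD: "convex ?D" by (rule convex_edom[OF pf cf])
  have vD: "v \<in> ?D" using u unfolding subdiff_def by auto
  obtain a c where "a \<noteq> 0" and av: "a \<bullet> v \<le> c" and a_int: "\<And>z. z \<in> interior ?D \<Longrightarrow> c \<le> a \<bullet> z"
  proof -
    have "{v} \<inter> interior ?D = {}" using \<open>v \<notin> interior (edom f)\<close> by simp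
    from separating_hyperplane_sets[OF convex_singleton convex_interior[OF cD] _ ne this]
    show ?thesis using that by auto
  qed
  obtain w0 where w0: "w0 \<in> interior ?D" using ne by blast
  have "convex_on ?D (\<lambda>_. 0::real)" using cD by (simp add: convex_on_const)
  then have "c + (- a) \<bullet> z \<le> 0" if "z \<in> ?D" for z
    by (rule convex_on_affine_minorant_extend[OF _ w0 that]) (simp add: a_int)
  then have a_dom: "c \<le> a \<bullet> z" if "z \<in> ?D" for z using that by simp
  \<comment> \<open>The normal \<open>a\<close> of a supporting hyperplane at \<open>v\<close> can be subtracted from \<open>u\<close>.\<close>
  have "u - a \<in> subdiff f v"
    unfolding subdiff_iff_real[OF pf]
  proof (intro conjI ballI vD)
    fix z assume z: "z \<in> ?D"
    have "?k v + u \<bullet> (z - v) \<le> ?k z" using u z unfolding subdiff_iff_real[OF pf] by blast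
    moreover have "a \<bullet> (z - v) \<ge> 0" using av a_dom[OF z] by (simp add: inner_diff_right)
    ultimately show "?k v + (u - a) \<bullet> (z - v) \<le> ?k z" by (simp add: inner_diff_left)
  qed
  then have "u - a = u" by (rule unique)
  with \<open>a \<noteq> 0\<close> show False by simp
qed

lemma egrad_eqI:
  assumes "((\<lambda>y. real_of_ereal (f y)) has_derivative (\<lambda>h. u \<bullet> h)) (at v)"
  shows "egrad f v = u"
proof -
  let ?P = "\<lambda>g. ((\<lambda>y. real_of_ereal (f y)) has_derivative (\<lambda>h. g \<bullet> h)) (at v)"
  have "?P (egrad f v)" unfolding egrad_def by (rule someI[of ?P u]) (rule assms)
  then have "(\<lambda>h. egrad f v \<bullet> h) = (\<lambda>h. u \<bullet> h)" using assms by (rule has_derivative_unique)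
  then have "egrad f v \<bullet> (egrad f v - u) = u \<bullet> (egrad f v - u)" by metis
  then have "(egrad f v - u) \<bullet> (egrad f v - u) = 0" by (simp add: inner_diff_left)
  then show ?thesis by simp
qed

lemma subgradient_norm_le:
  assumes pf: "proper_fun f" and "r > 0" and ball: "cball v (2 * r) \<subseteq> edom f"
    and M: "\<And>z. z \<in> cball v (2 * r) \<Longrightarrow> \<bar>real_of_ereal (f z)\<bar> \<le> M"
    and y: "y \<in> ball v r" and p: "p \<in> subdiff f y"
  shows "norm p \<le> 2 * M / r"
proof (cases "p = 0")
  case True
  have "0 \<le> M" using M[of v] \<open>r > 0\<close> by (smt (verit) centre_in_cball)
  with True \<open>r > 0\<close> show ?thesis by simp
next
  case False
  define z where "z = y + (r / norm p) *\<^sub>R p"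
  have "dist v z \<le> dist v y + dist y z" by (rule dist_triangle)
  also have "dist y z = r" using False \<open>r > 0\<close> unfolding z_def by (simp add: dist_norm)
  finally have z: "z \<in> cball v (2 * r)" using y by simp
  have y': "y \<in> cball v (2 * r)" using y \<open>r > 0\<close> by simp
  have "real_of_ereal (f y) + p \<bullet> (z - y) \<le> real_of_ereal (f z)"
    using p z ball unfolding subdiff_iff_real[OF pf] by blast
  moreover have "p \<bullet> (z - y) = r * norm p"
    using False unfolding z_def by (simp add: power2_norm_eq_inner[symmetric] power2_eq_square)
  ultimately have "r * norm p \<le> 2 * M" using M[OF z] M[OF y'] by linarith
  then show ?thesis using \<open>r > 0\<close> by (simp add: field_simps)
qed

lemma subdiff_limit:
  assumes pf: "proper_fun f" and v: "v \<in> edom f" and cont: "isCont (\<lambda>y. real_of_ereal (f y)) v"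
    and Y: "Y \<longlonglongrightarrow> v" and G: "G \<longlonglongrightarrow> l" and sub: "\<And>n. G n \<in> subdiff f (Y n)"
  shows "l \<in> subdiff f v"
  unfolding subdiff_iff_real[OF pf]
proof (intro conjI ballI v)
  let ?k = "\<lambda>y. real_of_ereal (f y)"
  fix z assume z: "z \<in> edom f"
  have "(\<lambda>n. ?k (Y n) + G n \<bullet> (z - Y n)) \<longlonglongrightarrow> ?k v + l \<bullet> (z - v)"
    by (intro tendsto_intros isCont_tendsto_compose[OF cont] Y G)
  moreover have "?k (Y n) + G n \<bullet> (z - Y n) \<le> ?k z" for n
    using sub[of n] z unfolding subdiff_iff_real[OF pf] by blast
  ultimately show "?k v + l \<bullet> (z - v) \<le> ?k z" by (intro LIMSEQ_le_const2) auto
qed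

lemma continuous_on_interior_edom:
  assumes "proper_fun f" "econvex f"
  shows "continuous_on (interior (edom f)) (\<lambda>y. real_of_ereal (f y))"
  using convex_on_continuous[OF open_interior convex_on_subset[OF convex_on_edom[OF assms]
        interior_subset convex_interior[OF convex_edom[OF assms]]]] .

lemma subdiff_locally_bounded:
  assumes pf: "proper_fun f" and cf: "econvex f" and v: "v \<in> interior (edom f)"
  obtains r B where "r > 0" "ball v r \<subseteq> interior (edom f)"
    and "\<And>y p. y \<in> ball v r \<Longrightarrow> p \<in> subdiff f y \<Longrightarrow> norm p \<le> B"
proof -
  let ?k = "\<lambda>y. real_of_ereal (f y)"
  obtain r where "r > 0" and ball: "cball v (2 * r) \<subseteq> interior (edom f)"
    using v open_interior open_contains_cball by (metis field_sum_of_halves half_gt_zero mult_2)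
  have "bounded (?k ` cball v (2 * r))"
    by (rule compact_imp_bounded[OF compact_continuous_image[OF
          continuous_on_subset[OF continuous_on_interior_edom[OF pf cf] ball] compact_cball]])
  then obtain M where M: "\<And>z. z \<in> cball v (2 * r) \<Longrightarrow> \<bar>?k z\<bar> \<le> M"
    unfolding bounded_iff real_norm_def by (metis image_eqI)
  show ?thesis
  proof (rule that[of r "2 * M / r"])
    show "ball v r \<subseteq> interior (edom f)" using ball \<open>r > 0\<close> by auto
    show "norm p \<le> 2 * M / r" if "y \<in> ball v r" "p \<in> subdiff f y" for y p
      using subgradient_norm_le[OF pf \<open>r > 0\<close> _ M that] ball interior_subset by blast
  qed (rule \<open>r > 0\<close>)
qed

lemma subgradient_selection_continuous:
  assumes pf: "proper_fun f" and cf: "econvex f" and v: "v \<in> interior (edom f)"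
    and u: "u \<in> subdiff f v"
    and unique: "\<And>u'. u' \<in> subdiff f v \<Longrightarrow> u' = u"
    and sel: "\<And>y. y \<in> interior (edom f) \<Longrightarrow> sg y \<in> subdiff f y"
    and "e > 0"
  obtains d where "d > 0" "\<And>y. norm (y - v) < d \<Longrightarrow> norm (sg y - u) \<le> e"
proof -
  obtain r B where "r > 0" and ball: "ball v r \<subseteq> interior (edom f)"
    and bound: "\<And>y p. y \<in> ball v r \<Longrightarrow> p \<in> subdiff f y \<Longrightarrow> norm p \<le> B"
    using subdiff_locally_bounded[OF pf cf v] by metis
  note found = that
  \<comment> \<open>Otherwise subgradients at points \<open>Y n \<longrightarrow> v\<close> stay away from \<open>u\<close>; a convergent subsequence of
    them has a subgradient at \<open>v\<close> as its limit, which must be \<open>u\<close>.\<close>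
  show ?thesis
  proof (rule ccontr)
    assume "\<not> thesis"
    have near: "\<exists>y. norm (y - v) < d \<and> e < norm (sg y - u)" if "d > 0" for d
      using found[OF \<open>d > 0\<close>] \<open>\<not> thesis\<close> by (meson not_le)
    then have "\<forall>n. \<exists>y. norm (y - v) < min r (inverse (Suc n)) \<and> e < norm (sg y - u)"
      using \<open>r > 0\<close> by (metis min_less_iff_conj of_nat_0_less_iff positive_imp_inverse_positive zero_less_Suc)
    from choice[OF this] obtain Y where Y: "\<And>n. norm (Y n - v) < min r (inverse (Suc n))"
      and far: "\<And>n. e < norm (sg (Y n) - u)" by blast
    have Y_ball: "Y n \<in> ball v r" for n using Y[of n] by (simp add: dist_norm norm_minus_commute)
    have "(\<lambda>n. Y n - v) \<longlonglongrightarrow> 0"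
    proof (rule Lim_null_comparison[OF _ LIMSEQ_inverse_real_of_nat])
      show "\<forall>\<^sub>F n in sequentially. norm (Y n - v) \<le> inverse (real (Suc n))"
        using Y by (intro always_eventually allI) (simp add: less_imp_le)
    qed
    then have "Y \<longlonglongrightarrow> v" using LIM_zero_cancel by blast
    have sub: "sg (Y n) \<in> subdiff f (Y n)" for n using sel Y_ball ball by blast
    have "\<forall>n. (sg \<circ> Y) n \<in> cball 0 B" using bound[OF Y_ball sub] by simp
    from seq_compactE[OF compact_imp_seq_compact[OF compact_cball] this]
    obtain l \<phi> where \<phi>: "strict_mono \<phi>" and "(sg \<circ> Y \<circ> \<phi>) \<longlonglongrightarrow> l" by blast
    then have lim: "(\<lambda>n. sg (Y (\<phi> n))) \<longlonglongrightarrow> l" by (simp add: comp_def)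
    have "l \<in> subdiff f v"
    proof (rule subdiff_limit[OF pf _ _ _ lim])
      show "v \<in> edom f" using v interior_subset by blast
      show "isCont (\<lambda>y. real_of_ereal (f y)) v"
        using continuous_on_interior_edom[OF pf cf] v continuous_on_eq_continuous_at[OF open_interior]
        by blast
      show "(\<lambda>n. Y (\<phi> n)) \<longlonglongrightarrow> v" using LIMSEQ_subseq_LIMSEQ[OF \<open>Y \<longlonglongrightarrow> v\<close> \<phi>] by (simp add: comp_def)
    qed (rule sub)
    then have "l = u" by (rule unique)
    have "(\<lambda>n. norm (sg (Y (\<phi> n)) - u)) \<longlonglongrightarrow> norm (l - u)" by (intro tendsto_intros lim)
    then have "e \<le> norm (l - u)" using far less_imp_le by (intro LIMSEQ_le_const) auto
    then show False using \<open>l = u\<close> \<open>e > 0\<close> by simp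
  qed
qed

lemma has_derivative_unique_subgradients:
  assumes pf: "proper_fun f" and cf: "econvex f" and v: "v \<in> interior (edom f)"
    and u: "u \<in> subdiff f v"
    and unique: "\<And>w u1 u2. w \<in> interior (edom f) \<Longrightarrow> u1 \<in> subdiff f w \<Longrightarrow> u2 \<in> subdiff f w
      \<Longrightarrow> u1 = u2"
  shows "((\<lambda>y. real_of_ereal (f y)) has_derivative (\<lambda>h. u \<bullet> h)) (at v)"
  unfolding has_derivative_at_alt
proof (intro conjI allI impI)
  let ?I = "interior (edom f)" and ?k = "\<lambda>y. real_of_ereal (f y)"
  show "bounded_linear (\<lambda>h. u \<bullet> h)" by (rule bounded_linear_inner_right)
  define sg where "sg y = (SOME p. p \<in> subdiff f y)" for y
  have sel: "sg y \<in> subdiff f y" if "y \<in> ?I" for y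
    using subdiff_nonempty_interior[OF pf cf that] unfolding sg_def by (metis someI)
  obtain r where "r > 0" and ball: "ball v r \<subseteq> ?I" using v open_interior open_contains_ball by blast
  have vD: "v \<in> edom f" using v interior_subset by blast
  fix e :: real assume "e > 0"
  obtain d where "d > 0" and d: "\<And>y. norm (y - v) < d \<Longrightarrow> norm (sg y - u) \<le> e"
    using subgradient_selection_continuous[OF pf cf v u unique[OF v _ u] sel \<open>e > 0\<close>] by blast
  show "\<exists>d>0. \<forall>y. norm (y - v) < d \<longrightarrow> norm (?k y - ?k v - u \<bullet> (y - v)) \<le> e * norm (y - v)"
  proof (intro exI[of _ "min d r"] conjI allI impI)
    show "min d r > 0" using \<open>d > 0\<close> \<open>r > 0\<close> by simp
    fix y assume y: "norm (y - v) < min d r"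
    then have yI: "y \<in> ?I" using ball by (auto simp: dist_norm norm_minus_commute)
    then have yD: "y \<in> edom f" using interior_subset by blast
    have lower: "?k v + u \<bullet> (y - v) \<le> ?k y"
      using u yD unfolding subdiff_iff_real[OF pf] by blast
    have upper: "?k y + sg y \<bullet> (v - y) \<le> ?k v"
      using sel[OF yI] vD unfolding subdiff_iff_real[OF pf] by blast
    have "(sg y - u) \<bullet> (y - v) \<le> norm (sg y - u) * norm (y - v)" by (rule norm_cauchy_schwarz)
    also have "\<dots> \<le> e * norm (y - v)" using d y by (intro mult_right_mono) auto
    finally have "(sg y - u) \<bullet> (y - v) \<le> e * norm (y - v)" .
    moreover have "sg y \<bullet> (v - y) = - (sg y \<bullet> (y - v))" by (simp add: inner_diff_right)
    ultimately show "norm (?k y - ?k v - u \<bullet> (y - v)) \<le> e * norm (y - v)"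
      using lower upper by (simp add: inner_diff_left)
  qed
qed

section \<open>The conjugate of a Legendre function\<close>

locale legendre_fun =
  fixes H :: "'a::euclidean_space \<Rightarrow> ereal"
  assumes legendre: "legendre H"
begin

lemma proper: "proper_fun H"
  using legendre unfolding legendre_def Gamma0_def by auto

lemma subdiff_exists: obtains p u where "p \<in> subdiff H u"
  using legendre unfolding legendre_def by blast

lemma conj_Gamma0: "fconj H \<in> Gamma0"
  using subdiff_exists fconj_Gamma0[OF proper] by metis

lemma conj_proper: "proper_fun (fconj H)"
  using conj_Gamma0 unfolding Gamma0_def by auto

lemma conj_econvex: "econvex (fconj H)"
  using conj_Gamma0 unfolding Gamma0_def by auto

lemma conj_subdiff_dual:
  assumes u: "u \<in> subdiff (fconj H) w"
  shows "H u = ereal (u \<bullet> w - real_of_ereal (fconj H w))"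
    and "w \<in> subdiff H u"
    and "u \<in> interior (edom H)"
proof -
  let ?k = "\<lambda>y. real_of_ereal (H y)" and ?kw = "real_of_ereal (fconj H w)"
  have w: "w \<in> edom (fconj H)" using u unfolding subdiff_def by blast
  have young: "w \<bullet> y - ?kw \<le> ?k y" if "y \<in> edom H" for y
    using fenchel_young_real[OF proper that w] by simp
  obtain p0 u0 where "p0 \<in> subdiff H u0" by (rule subdiff_exists)
  then have "H u \<le> fconj (fconj H) u" using le_fconj_fconj legendre unfolding legendre_def by blast
  also have "\<dots> = ereal (u \<bullet> w - ?kw)" by (rule fenchel_young_eq[OF conj_proper u])
  finally have "H u \<le> ereal (u \<bullet> w - ?kw)" .
  then have uH: "u \<in> edom H" unfolding edom_def by auto
  then obtain h where "H u = ereal h" using proper unfolding proper_fun_def edom_def by (cases "H u") auto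
  with \<open>H u \<le> ereal (u \<bullet> w - ?kw)\<close> young[OF uH] show Hu: "H u = ereal (u \<bullet> w - ?kw)"
    by (simp add: inner_commute)
  show sub: "w \<in> subdiff H u"
    unfolding subdiff_iff_real[OF proper]
  proof (intro conjI ballI uH)
    fix y assume "y \<in> edom H"
    then show "?k u + w \<bullet> (y - u) \<le> ?k y"
      using young[of y] Hu by (simp add: inner_diff_right inner_commute)
  qed
  show "u \<in> interior (edom H)"
    using legendre sub uH unfolding legendre_def by blast
qed

lemma conj_subdiff_unique:
  assumes "u1 \<in> subdiff (fconj H) w" "u2 \<in> subdiff (fconj H) w"
  shows "u1 = u2"
proof (rule ccontr)
  assume "u1 \<noteq> u2"
  let ?kw = "real_of_ereal (fconj H w)"
  note dual1 = conj_subdiff_dual[OF assms(1)] and dual2 = conj_subdiff_dual[OF assms(2)]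
  define m where "m = (1 - 1/2) *\<^sub>R u1 + (1/2::real) *\<^sub>R u2"
  have "estrict_convex_on (interior (edom H)) H" using legendre unfolding legendre_def by blast
  then have "H m < ereal (1 - 1/2) * H u1 + ereal (1/2) * H u2"
    unfolding m_def estrict_convex_on_def using dual1(3) dual2(3) \<open>u1 \<noteq> u2\<close>
    by (elim ballE allE[of _ "1/2"]) auto
  also have "\<dots> = ereal (m \<bullet> w - ?kw)"
    unfolding dual1(1) dual2(1) m_def by (simp add: inner_add_left field_simps)
  finally have less: "H m < ereal (m \<bullet> w - ?kw)" .
  then obtain h where h: "H m = ereal h"
    using proper_fun_not_MInf[OF proper, of m] by (cases "H m") auto
  then have "m \<in> edom H" unfolding edom_def by simp
  moreover have "w \<in> edom (fconj H)" using assms(1) unfolding subdiff_def by blast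
  ultimately have "w \<bullet> m - h \<le> ?kw" using fenchel_young_real[OF proper] h by fastforce
  with less h show False by (simp add: inner_commute)
qed

lemma conj_egrad_subdiff:
  assumes w: "w \<in> interior (edom (fconj H))"
  shows "egrad (fconj H) w \<in> subdiff (fconj H) w"
proof -
  obtain u where u: "u \<in> subdiff (fconj H) w"
    using subdiff_nonempty_interior[OF conj_proper conj_econvex w] by blast
  have "egrad (fconj H) w = u"
    by (rule egrad_eqI, rule has_derivative_unique_subgradients[OF conj_proper conj_econvex w u])
      (rule conj_subdiff_unique)
  with u show ?thesis by simp
qed

lemma conj_subdiff_imp_interior:
  assumes "interior (edom (fconj H)) \<noteq> {}" and u: "u \<in> subdiff (fconj H) v"
  shows "v \<in> interior (edom (fconj H))" and "egrad (fconj H) v = u"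
proof -
  show v: "v \<in> interior (edom (fconj H))"
    using interior_if_unique_subgradient[OF conj_proper conj_econvex assms(1) u]
      conj_subdiff_unique[OF _ u] by blast
  show "egrad (fconj H) v = u" using conj_subdiff_unique[OF conj_egrad_subdiff[OF v] u] .
qed

lemma bregman_conj_real:
  assumes "v \<in> edom (fconj H)" "w \<in> edom (fconj H)"
  shows "bregman (fconj H) v w = ereal (real_of_ereal (fconj H v) - real_of_ereal (fconj H w)
           - egrad (fconj H) w \<bullet> (v - w))"
proof -
  obtain a b where "fconj H v = ereal a" "fconj H w = ereal b"
    using proper_fun_finite[OF conj_proper assms(1)] proper_fun_finite[OF conj_proper assms(2)] by blast
  then show ?thesis unfolding bregman_def by simp
qed

lemma bregman_conj_nonneg:
  assumes v: "v \<in> edom (fconj H)" and w: "w \<in> interior (edom (fconj H))"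
  shows "0 \<le> bregman (fconj H) v w"
proof -
  have "real_of_ereal (fconj H w) + egrad (fconj H) w \<bullet> (v - w) \<le> real_of_ereal (fconj H v)"
    using conj_egrad_subdiff[OF w] v unfolding subdiff_iff_real[OF conj_proper] by blast
  moreover have "w \<in> edom (fconj H)" using w interior_subset by blast
  ultimately show ?thesis using bregman_conj_real[OF v] by simp
qed

lemma bregman_conj_eq_0_imp_eq:
  assumes v: "v \<in> edom (fconj H)" and w: "w \<in> interior (edom (fconj H))"
    and zero: "bregman (fconj H) v w = 0"
  shows "v = w"
proof -
  let ?K = "fconj H" and ?u = "egrad (fconj H) w"
  let ?k = "\<lambda>y. real_of_ereal (H y)" and ?kK = "\<lambda>y. real_of_ereal (fconj H y)"
  note dual = conj_subdiff_dual[OF conj_egrad_subdiff[OF w]]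
  have "w \<in> edom (fconj H)" using w interior_subset by blast
  then have "?kK v = ?kK w + ?u \<bullet> (v - w)"
    using zero bregman_conj_real[OF v] by (simp add: zero_ereal_def)
  then have Hu: "?k ?u = ?u \<bullet> v - ?kK v" using dual(1) by (simp add: inner_diff_right)
  have uH: "?u \<in> edom H" using dual(3) interior_subset by blast
  have "v \<in> subdiff H ?u"
    unfolding subdiff_iff_real[OF proper]
  proof (intro conjI ballI uH)
    fix y assume "y \<in> edom H"
    then have "v \<bullet> y - ?k y \<le> ?kK v" using fenchel_young_real[OF proper _ v] by blast
    then show "?k ?u + v \<bullet> (y - ?u) \<le> ?k y" using Hu by (simp add: inner_diff_right inner_commute)
  qed
  moreover have "subdiff H ?u = {egrad H ?u}" using legendre dual(3) unfolding legendre_def by blast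
  ultimately show ?thesis using dual(2) by simp
qed

end

section \<open>The two minimization problems\<close>

definition hopf_lax_objective ::
    "('a::euclidean_space \<Rightarrow> ereal) \<Rightarrow> ('a \<Rightarrow> ereal) \<Rightarrow> real \<Rightarrow> 'a \<Rightarrow> 'a \<Rightarrow> ereal" where
  "hopf_lax_objective J H t x v = J (x - t *\<^sub>R v) + ereal t * fconj H v"

definition bregman_objective ::
    "('a::euclidean_space \<Rightarrow> ereal) \<Rightarrow> ('a \<Rightarrow> ereal) \<Rightarrow> real \<Rightarrow> 'a \<Rightarrow> 'a \<Rightarrow> ereal" where
  "bregman_objective J H t x v =
     ereal t * bregman (fconj H) ((1 / t) *\<^sub>R x) v + fconj J (egrad (fconj H) v)"

locale hopf_lax_problem = legendre_fun H for H :: "'a::euclidean_space \<Rightarrow> ereal" +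
  fixes J :: "'a \<Rightarrow> ereal" and t :: real and x :: 'a
  assumes J_Gamma0: "J \<in> Gamma0" and J_coercive: "one_coercive J" and t_pos: "t > 0"
    and x_qualified: "x \<in> {a + t *\<^sub>R b | a b. a \<in> edom J \<and> b \<in> interior (edom (fconj H))}"
begin

abbreviation P1 :: "'a \<Rightarrow> ereal" where "P1 \<equiv> bregman_objective J H t x"

abbreviation P2 :: "'a \<Rightarrow> ereal" where "P2 \<equiv> hopf_lax_objective J H t x"

lemma J_proper: "proper_fun J"
  using J_Gamma0 unfolding Gamma0_def by auto

lemma P2_real:
  assumes "x - t *\<^sub>R v \<in> edom J" "v \<in> edom (fconj H)"
  shows "P2 v = ereal (real_of_ereal (J (x - t *\<^sub>R v)) + t * real_of_ereal (fconj H v))"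
proof -
  obtain a b where "J (x - t *\<^sub>R v) = ereal a" "fconj H v = ereal b"
    using proper_fun_finite[OF J_proper assms(1)] proper_fun_finite[OF conj_proper assms(2)] by blast
  then show ?thesis unfolding hopf_lax_objective_def by simp
qed

lemma P2_finite_imp:
  assumes "P2 v < \<infinity>"
  shows "x - t *\<^sub>R v \<in> edom J" and "v \<in> edom (fconj H)"
  using assms proper_fun_not_MInf[OF J_proper, of "x - t *\<^sub>R v"]
    proper_fun_not_MInf[OF conj_proper, of v] t_pos
  unfolding hopf_lax_objective_def edom_def
  by (cases "J (x - t *\<^sub>R v)"; cases "fconj H v"; simp)+

lemma qualification_point:
  obtains v0 where "v0 \<in> interior (edom (fconj H))" "x - t *\<^sub>R v0 \<in> edom J"
  using x_qualified by auto

lemma P2_lsc: "lsc P2"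
proof -
  have "lsc J" "lsc (fconj H)" using J_Gamma0 conj_Gamma0 unfolding Gamma0_def by auto
  moreover have "ereal t * fconj H v \<noteq> -\<infinity>" for v
    using proper_fun_not_MInf[OF conj_proper, of v] t_pos by (cases "fconj H v") auto
  ultimately show ?thesis
    unfolding hopf_lax_objective_def
    by (intro lsc_add lsc_compose_affine lsc_cmult t_pos proper_fun_not_MInf[OF conj_proper]
        proper_fun_not_MInf[OF J_proper])
qed

lemma P2_sublevel_bounded: "bounded {v. P2 v \<le> ereal C}"
proof -
  obtain u0 where "u0 \<in> edom H" using proper unfolding proper_fun_def by auto
  then obtain h0 where h0: "H u0 = ereal h0" using proper_fun_finite[OF proper] by blast
  have K_ge: "ereal (v \<bullet> u0 - h0) \<le> fconj H v" for v
    using fenchel_young[of v u0 H] h0 by simp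
  \<comment> \<open>\<open>H\<^sup>*\<close> is bounded below by \<open>v \<bullet> u0 - H u0\<close>, which the growth \<open>L |y|\<close> of \<open>J\<close> dominates.\<close>
  define L where "L = norm u0 + 1"
  obtain R where J_ge: "\<And>y. R \<le> norm y \<Longrightarrow> ereal (L * norm y) \<le> J y"
    using one_coercive_ge_linear[OF J_coercive proper_fun_not_MInf[OF J_proper]] by blast
  have "norm v \<le> max ((norm x + R) / t) ((C + L * norm x + t * \<bar>h0\<bar>) / t)"
    if P2v: "P2 v \<le> ereal C" for v
  proof -
    let ?y = "x - t *\<^sub>R v"
    have "norm (t *\<^sub>R v) \<le> norm x + norm ?y" using norm_triangle_ineq4[of x ?y] by simp
    then have tv: "t * norm v \<le> norm ?y + norm x" using t_pos by simp
    show ?thesis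
    proof (cases "norm ?y < R")
      case True
      then have "norm v \<le> (norm x + R) / t" using tv t_pos by (simp add: field_simps)
      then show ?thesis by simp
    next
      case False
      have "ereal t * ereal (v \<bullet> u0 - h0) \<le> ereal t * fconj H v"
        using K_ge[of v] t_pos by (intro ereal_mult_left_mono) auto
      then have "ereal (L * norm ?y) + ereal (t * (v \<bullet> u0 - h0)) \<le> P2 v"
        unfolding hopf_lax_objective_def using J_ge False by (intro add_mono) auto
      from order_trans[OF this P2v] have le_C: "L * norm ?y + t * (v \<bullet> u0 - h0) \<le> C" by simp
      have "- (norm v * norm u0) \<le> v \<bullet> u0" using norm_cauchy_schwarz[of "- v" u0] by simp
      then have "t * (- (norm v * norm u0) - \<bar>h0\<bar>) \<le> t * (v \<bullet> u0 - h0)"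
        using t_pos by (intro mult_left_mono) auto
      moreover have "L * (t * norm v - norm x) \<le> L * norm ?y"
        using tv unfolding L_def by (intro mult_left_mono) auto
      ultimately have "t * norm v \<le> C + L * norm x + t * \<bar>h0\<bar>"
        using le_C unfolding L_def by (simp add: algebra_simps)
      then have "norm v \<le> (C + L * norm x + t * \<bar>h0\<bar>) / t" using t_pos by (simp add: field_simps)
      then show ?thesis by simp
    qed
  qed
  then show ?thesis unfolding bounded_iff by blast
qed

lemma P2_has_min:
  obtains v where "\<And>w. P2 v \<le> P2 w"
proof -
  obtain v0 where v0: "v0 \<in> interior (edom (fconj H))" "x - t *\<^sub>R v0 \<in> edom J"
    by (rule qualification_point)
  then have "v0 \<in> edom (fconj H)" using interior_subset by blast
  then have "bounded {v. P2 v \<le> P2 v0}" using P2_real[OF v0(2)] P2_sublevel_bounded by simp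
  with P2_lsc show ?thesis using lsc_attains_min that by blast
qed

lemma P2_min_domain:
  assumes min: "\<And>w. P2 vs \<le> P2 w"
  shows "x - t *\<^sub>R vs \<in> edom J" and "vs \<in> edom (fconj H)"
proof -
  obtain v0 where v0: "v0 \<in> interior (edom (fconj H))" "x - t *\<^sub>R v0 \<in> edom J"
    by (rule qualification_point)
  then have "v0 \<in> edom (fconj H)" using interior_subset by blast
  then have "P2 vs \<le> ereal (real_of_ereal (J (x - t *\<^sub>R v0)) + t * real_of_ereal (fconj H v0))"
    using min[of v0] P2_real[OF v0(2)] by simp
  then have "P2 vs < \<infinity>" by (rule order.strict_trans1) simp
  then show "x - t *\<^sub>R vs \<in> edom J" and "vs \<in> edom (fconj H)" by (rule P2_finite_imp)+
qed

lemma P2_min_common_subgradient: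
  assumes min: "\<And>w. P2 vs \<le> P2 w"
  obtains g where "g \<in> subdiff (fconj H) vs" and "g \<in> subdiff J (x - t *\<^sub>R vs)"
proof -
  let ?A = "{v. x - t *\<^sub>R v \<in> edom J}" and ?B = "edom (fconj H)"
  let ?f = "\<lambda>v. real_of_ereal (J (x - t *\<^sub>R v))" and ?g = "\<lambda>v. t * real_of_ereal (fconj H v)"
  obtain v0 where v0: "v0 \<in> interior ?B" "x - t *\<^sub>R v0 \<in> edom J" by (rule qualification_point)
  have vs: "vs \<in> ?A" "vs \<in> ?B" using P2_min_domain[OF min] by auto
  have v0A: "v0 \<in> ?A" using v0(2) by simp
  have fA: "convex_on ?A ?f"
    using convex_on_compose_affine[OF convex_on_edom[OF J_proper]] J_Gamma0
    unfolding Gamma0_def by blast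
  have gB: "convex_on ?B ?g"
    using convex_on_edom[OF conj_proper conj_econvex] t_pos by (intro convex_on_cmul) auto
  have minAB: "?f vs + ?g vs \<le> ?f w + ?g w" if "w \<in> ?A" "w \<in> ?B" for w
    using min[of w] P2_real[of w] P2_real[of vs] that vs by simp
  obtain p where p_K: "\<And>w. w \<in> ?B \<Longrightarrow> ?g vs + p \<bullet> (w - vs) \<le> ?g w"
    and p_J: "\<And>w. w \<in> ?A \<Longrightarrow> ?f vs - p \<bullet> (w - vs) \<le> ?f w"
    using convex_sum_min_subgradients[OF fA gB v0A v0(1) vs minAB] by metis
  show ?thesis
  proof (rule that[of "(1 / t) *\<^sub>R p"])
    show "(1 / t) *\<^sub>R p \<in> subdiff (fconj H) vs"
      unfolding subdiff_iff_real[OF conj_proper]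
    proof (intro conjI ballI vs)
      fix w assume "w \<in> ?B"
      then show "real_of_ereal (fconj H vs) + (1 / t) *\<^sub>R p \<bullet> (w - vs) \<le> real_of_ereal (fconj H w)"
        using p_K[of w] t_pos by (simp add: field_simps)
    qed
    show "(1 / t) *\<^sub>R p \<in> subdiff J (x - t *\<^sub>R vs)"
      unfolding subdiff_iff_real[OF J_proper]
    proof (intro conjI ballI)
      show "x - t *\<^sub>R vs \<in> edom J" using vs by simp
      fix z assume z: "z \<in> edom J"
      define w where "w = (1 / t) *\<^sub>R (x - z)"
      have "x - t *\<^sub>R w = z" unfolding w_def using t_pos by simp
      moreover have "p \<bullet> (w - vs) = (1 / t) *\<^sub>R p \<bullet> ((x - t *\<^sub>R vs) - z)"
        unfolding w_def using t_pos by (simp add: algebra_simps)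
      ultimately show "real_of_ereal (J (x - t *\<^sub>R vs)) + (1 / t) *\<^sub>R p \<bullet> (z - (x - t *\<^sub>R vs))
          \<le> real_of_ereal (J z)"
        using p_J[of w] z by (simp add: inner_diff_right)
    qed
  qed
qed

lemma P1_lower_bound:
  assumes x': "(1 / t) *\<^sub>R x \<in> edom (fconj H)" and w: "w \<in> interior (edom (fconj H))"
    and v: "x - t *\<^sub>R v \<in> edom J" "v \<in> edom (fconj H)"
  shows "ereal (t * real_of_ereal (fconj H ((1 / t) *\<^sub>R x)) - real_of_ereal (P2 v)
           + t * real_of_ereal (bregman (fconj H) v w)) \<le> P1 w"
proof -
  let ?u = "egrad (fconj H) w" and ?x' = "(1 / t) *\<^sub>R x" and ?z = "x - t *\<^sub>R v"
  let ?kK = "\<lambda>y. real_of_ereal (fconj H y)" and ?j = "real_of_ereal (J (x - t *\<^sub>R v))"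
  have wD: "w \<in> edom (fconj H)" using w interior_subset by blast
  have "ereal (?u \<bullet> ?z - ?j) \<le> fconj J ?u"
    using fenchel_young[of ?u ?z J] proper_fun_finite[OF J_proper v(1)] by (metis ereal_minus(1))
  moreover have "P1 w = ereal (t * (?kK ?x' - ?kK w - ?u \<bullet> (?x' - w))) + fconj J ?u"
    unfolding bregman_objective_def bregman_conj_real[OF x' wD] by simp
  ultimately have "ereal (t * (?kK ?x' - ?kK w - ?u \<bullet> (?x' - w))) + ereal (?u \<bullet> ?z - ?j) \<le> P1 w"
    by (metis add_left_mono)
  \<comment> \<open>The three-point identity for Bregman distances, using \<open>t x' = x\<close>\<close>
  moreover have "t * (?kK ?x' - ?kK w - ?u \<bullet> (?x' - w)) + (?u \<bullet> ?z - ?j)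
      = t * ?kK ?x' - (?j + t * ?kK v) + t * (?kK v - ?kK w - ?u \<bullet> (v - w))"
    using t_pos by (simp add: algebra_simps)
  ultimately show ?thesis by (simp add: P2_real[OF v] bregman_conj_real[OF v(2) wD])
qed

lemma P1_eq_at_common_subgradient:
  assumes x': "(1 / t) *\<^sub>R x \<in> edom (fconj H)" and vs: "vs \<in> interior (edom (fconj H))"
    and g: "egrad (fconj H) vs \<in> subdiff J (x - t *\<^sub>R vs)"
  shows "P1 vs = ereal (t * real_of_ereal (fconj H ((1 / t) *\<^sub>R x)) - real_of_ereal (P2 vs))"
proof -
  let ?g = "egrad (fconj H) vs" and ?x' = "(1 / t) *\<^sub>R x" and ?z = "x - t *\<^sub>R vs"
  let ?kK = "\<lambda>y. real_of_ereal (fconj H y)" and ?j = "real_of_ereal (J (x - t *\<^sub>R vs))"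
  have vsD: "vs \<in> edom (fconj H)" using vs interior_subset by blast
  have zD: "?z \<in> edom J" using g unfolding subdiff_def by blast
  have "P1 vs = ereal (t * (?kK ?x' - ?kK vs - ?g \<bullet> (?x' - vs)) + (?g \<bullet> ?z - ?j))"
    unfolding bregman_objective_def bregman_conj_real[OF x' vsD] fenchel_young_eq[OF J_proper g]
    by simp
  also have "\<dots> = ereal (t * ?kK ?x' - (?j + t * ?kK vs))"
    using t_pos by (simp add: algebra_simps)
  finally show ?thesis by (simp add: P2_real[OF zD vsD])
qed

lemma P2_min_gradient:
  assumes min: "\<And>w. P2 vs \<le> P2 w"
  shows "vs \<in> interior (edom (fconj H))" and "egrad (fconj H) vs \<in> subdiff J (x - t *\<^sub>R vs)"
proof -
  obtain g where gK: "g \<in> subdiff (fconj H) vs" and gJ: "g \<in> subdiff J (x - t *\<^sub>R vs)"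
    using P2_min_common_subgradient[OF min] by blast
  have "interior (edom (fconj H)) \<noteq> {}" using qualification_point by blast
  note vs = conj_subdiff_imp_interior[OF this gK]
  show "vs \<in> interior (edom (fconj H))" by (rule vs(1))
  show "egrad (fconj H) vs \<in> subdiff J (x - t *\<^sub>R vs)" using gJ vs(2) by simp
qed

lemma P2_min_solves_P1:
  assumes x': "(1 / t) *\<^sub>R x \<in> edom (fconj H)" and min: "\<And>w. P2 vs \<le> P2 w"
  shows "vs \<in> interior (edom (fconj H))"
    and "\<And>w. w \<in> interior (edom (fconj H)) \<Longrightarrow> P1 vs \<le> P1 w"
    and "\<And>w. w \<in> interior (edom (fconj H)) \<Longrightarrow> P1 w \<le> P1 vs \<Longrightarrow> w = vs"
    and "P1 vs + P2 vs = ereal t * fconj H ((1 / t) *\<^sub>R x)"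
proof -
  let ?c = "t * real_of_ereal (fconj H ((1 / t) *\<^sub>R x)) - real_of_ereal (P2 vs)"
  note grad = P2_min_gradient[OF min] and dom = P2_min_domain[OF min]
  show "vs \<in> interior (edom (fconj H))" by (rule grad(1))
  have P1_vs: "P1 vs = ereal ?c" by (rule P1_eq_at_common_subgradient[OF x' grad])
  have ge: "ereal (?c + t * real_of_ereal (bregman (fconj H) vs w)) \<le> P1 w"
    and breg: "0 \<le> real_of_ereal (bregman (fconj H) vs w)"
    if w: "w \<in> interior (edom (fconj H))" for w
  proof -
    show "ereal (?c + t * real_of_ereal (bregman (fconj H) vs w)) \<le> P1 w"
      using P1_lower_bound[OF x' w dom] by (simp add: algebra_simps)
    show "0 \<le> real_of_ereal (bregman (fconj H) vs w)"
      using bregman_conj_nonneg[OF dom(2) w] by (simp add: real_of_ereal_pos)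
  qed
  show "P1 vs \<le> P1 w" if w: "w \<in> interior (edom (fconj H))" for w
  proof -
    have "P1 vs \<le> ereal (?c + t * real_of_ereal (bregman (fconj H) vs w))"
      using P1_vs breg[OF w] t_pos by simp
    also have "\<dots> \<le> P1 w" by (rule ge[OF w])
    finally show ?thesis .
  qed
  show "w = vs" if w: "w \<in> interior (edom (fconj H))" and le: "P1 w \<le> P1 vs" for w
  proof -
    have "t * real_of_ereal (bregman (fconj H) vs w) \<le> 0"
      using order_trans[OF ge[OF w] le] P1_vs by simp
    then have "real_of_ereal (bregman (fconj H) vs w) = 0"
      using mult_le_0_iff[of t "real_of_ereal (bregman (fconj H) vs w)"] breg[OF w] t_pos
      by (meson antisym not_le)
    moreover have "w \<in> edom (fconj H)" using w interior_subset by blast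
    ultimately have "bregman (fconj H) vs w = 0"
      using bregman_conj_real[OF dom(2)] by (simp add: zero_ereal_def)
    then show ?thesis using bregman_conj_eq_0_imp_eq[OF dom(2) w] by simp
  qed
  obtain p where p: "P2 vs = ereal p" using P2_real[OF dom] by blast
  obtain k where k: "fconj H ((1 / t) *\<^sub>R x) = ereal k"
    using proper_fun_finite[OF conj_proper x'] by blast
  show "P1 vs + P2 vs = ereal t * fconj H ((1 / t) *\<^sub>R x)" using P1_vs p k by simp
qed

end

theorem proposition3p1:
  fixes J H :: "'a::euclidean_space \<Rightarrow> ereal" and t :: real and x :: 'a
  assumes J: "J \<in> Gamma0" and Jcoer: "one_coercive J"
    and H: "H \<in> Gamma0" and Hleg: "legendre H"
    and t: "t > 0"
    and x1: "x \<in> {a + t *\<^sub>R b | a b. a \<in> edom J \<and> b \<in> interior (edom (fconj H))}"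
    and x2: "x \<in> (\<lambda>b. t *\<^sub>R b) ` edom (fconj H)"
  defines "F1 \<equiv> (\<lambda>v. ereal t * bregman (fconj H) ((1 / t) *\<^sub>R x) v + fconj J (egrad (fconj H) v))"
    and "F2 \<equiv> (\<lambda>v. J (x - t *\<^sub>R v) + ereal t * fconj H v)"
  shows "\<exists>v. v \<in> interior (edom (fconj H))
      \<and> (\<forall>w\<in>interior (edom (fconj H)). F1 v \<le> F1 w)
      \<and> (\<forall>u\<in>interior (edom (fconj H)). (\<forall>w\<in>interior (edom (fconj H)). F1 u \<le> F1 w) \<longrightarrow> u = v)
      \<and> (\<forall>w. F2 v \<le> F2 w)
      \<and> (\<forall>u. (\<forall>w. F2 u \<le> F2 w) \<longrightarrow> u = v)
      \<and> F1 v + F2 v = fconj (\<lambda>y. ereal t * H y) x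
      \<and> fconj (\<lambda>y. ereal t * H y) x = ereal t * fconj H ((1 / t) *\<^sub>R x)"
proof -
  interpret hopf_lax_problem H J t x
    using Hleg J Jcoer t x1 by unfold_locales
  have x': "(1 / t) *\<^sub>R x \<in> edom (fconj H)" using x2 t by auto
  have F: "F1 = P1" "F2 = P2"
    unfolding F1_def F2_def bregman_objective_def hopf_lax_objective_def by (rule refl)+
  obtain v where min: "\<And>w. P2 v \<le> P2 w" using P2_has_min by metis
  note P1_min = P2_min_solves_P1[OF x' min]
  have P2_unique: "u = v" if "\<forall>w. P2 u \<le> P2 w" for u
  proof -
    note u = P2_min_solves_P1[OF x', of u]
    have "u \<in> interior (edom (fconj H))" "P1 u \<le> P1 v"
      using u(1,2) P1_min(1) that by blast+
    then show "u = v" by (rule P1_min(3))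
  qed
  show ?thesis
    unfolding F fconj_cmult[OF t]
    using P1_min min P2_unique by blast
qed

end
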